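(* Let $m,n\in\mathbb{N}$, $T=\{1,\dots,m\}$, $\mathcal{F}(A,b)=\{x\in\mathbb{R}^n\mid Ax\le b\}$ for $(A,b)\in\mathbb{R}^{m\times n}\times\mathbb{R}^m$, and let $(\bar A,\bar b)$ be such that $\mathcal{F}(\bar A,\bar b)$ is nonempty and bounded. Then $$\operatorname{Lipusc}\mathcal{F}(\bar A,\bar b)=\max_{x\in\mathcal{E}(\bar A,\bar b)}\operatorname{clm}\mathcal{F}\big((\bar A,\bar b),x\big).$$
   Context: $\mathcal{E}(\bar A,\bar b):=\operatorname{extr}\big(\mathcal{F}(\bar A,\bar b)\cap\operatorname{span}\{\bar a_t,\ t\in T\}\big)$, where $\bar a_t'$ is the $t$-th row of $\bar A$ and $\operatorname{extr}$ denotes the set of extreme points. $\mathbb{R}^n$ carries an arbitrary norm $\|\cdot\|$ with dual norm $\|u\|_*=\max_{\|x\|\le1}|u'x|$; the parameter space carries the norm $\|(A,b)\|=\max_{t\in T}\max\{\|a_t\|_*,|b_t|\}$. $\operatorname{dist}(x,\Omega)=\inf_{\omega\in\Omega}\|x-\omega\|$ with $\inf\emptyset=+\infty$. $\operatorname{Lipusc}\mathcal{F}(\bar A,\bar b)$ is the infimum of all $\kappa\ge0$ for which there is a neighborhood $V$ of $(\bar A,\bar b)$ with $\operatorname{dist}(x,\mathcal{F}(\bar A,\bar b))\le\kappa\|(A,b)-(\bar A,\bar b)\|$ for all $(A,b)\in V$, $x\in\mathcal{F}(A,b)$. For $\bar x\in\mathcal{F}(\bar A,\bar b)$, $\operatorname{clm}\mathcal{F}((\bar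 A,\bar b),\bar x)$ is the infimum of all $\kappa\ge0$ for which there are neighborhoods $V$ of $(\bar A,\bar b)$ and $U$ of $\bar x$ with $\operatorname{dist}(x,\mathcal{F}(\bar A,\bar b))\le\kappa\|(A,b)-(\bar A,\bar b)\|$ for all $(A,b)\in V$, $x\in\mathcal{F}(A,b)\cap U$. *)

theory Defs
  imports "HOL-Analysis.Analysis"
begin

text \<open>Vectors of R^n are real^'n; the index set T = {1..m} is the finite type 'm.
  A matrix A in R^(m x n) is given by its rows: A $ t :: real^'n is the t-th row a_t.\<close>

definition is_norm :: "(real^'n \<Rightarrow> real) \<Rightarrow> bool" where
  "is_norm N \<longleftrightarrow> (\<forall>x. 0 \<le> N x) \<and> (\<forall>x. N x = 0 \<longleftrightarrow> x = 0)
     \<and> (\<forall>c x. N (c *\<^sub>R x) = \<bar>c\<bar> * N x) \<and> (\<forall>x y. N (x + y) \<le> N x + N y)"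

definition dual_norm :: "(real^'n \<Rightarrow> real) \<Rightarrow> real^'n \<Rightarrow> real" where
  "dual_norm N u = Sup {\<bar>u \<bullet> x\<bar> | x. N x \<le> 1}"

definition param_norm :: "(real^'n \<Rightarrow> real) \<Rightarrow> real^'n^'m::finite \<Rightarrow> real^'m \<Rightarrow> real" where
  "param_norm N A b = Max (range (\<lambda>t. max (dual_norm N (A $ t)) \<bar>b $ t\<bar>))"

definition feas :: "real^'n^'m \<Rightarrow> real^'m \<Rightarrow> (real^'n) set" where
  "feas A b = {x. \<forall>t. A $ t \<bullet> x \<le> b $ t}"

definition extr_set :: "real^'n^'m \<Rightarrow> real^'m \<Rightarrow> (real^'n) set" where
  "extr_set A b = {x. x extreme_point_of (feas A b \<inter> span (range (\<lambda>t. A $ t)))}"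

text \<open>dist(x, Omega) = inf of N(x - w), with inf of the empty set = +infinity.\<close>
definition distN :: "(real^'n \<Rightarrow> real) \<Rightarrow> real^'n \<Rightarrow> (real^'n) set \<Rightarrow> ereal" where
  "distN N x \<Omega> = Inf ((\<lambda>w. ereal (N (x - w))) ` \<Omega>)"

text \<open>Lipschitz upper semicontinuity modulus (infimum of an empty set is +infinity).
  Neighborhoods of (A,b) are expressed by balls in the parameter norm.\<close>
definition Lipusc :: "(real^'n \<Rightarrow> real) \<Rightarrow> real^'n^'m::finite \<Rightarrow> real^'m \<Rightarrow> ereal" where
  "Lipusc N A b = Inf {ereal \<kappa> | \<kappa>. 0 \<le> \<kappa> \<and> (\<exists>\<delta>>0. \<forall>A' b'.
      param_norm N (A' - A) (b' - b) < \<delta> \<longrightarrow>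
      (\<forall>x\<in>feas A' b'. distN N x (feas A b) \<le> ereal (\<kappa> * param_norm N (A' - A) (b' - b))))}"

definition clm :: "(real^'n \<Rightarrow> real) \<Rightarrow> real^'n^'m::finite \<Rightarrow> real^'m \<Rightarrow> real^'n \<Rightarrow> ereal" where
  "clm N A b xbar = Inf {ereal \<kappa> | \<kappa>. 0 \<le> \<kappa> \<and> (\<exists>\<delta>>0. \<exists>\<epsilon>>0. \<forall>A' b'.
      param_norm N (A' - A) (b' - b) < \<delta> \<longrightarrow>
      (\<forall>x\<in>feas A' b'. N (x - xbar) < \<epsilon> \<longrightarrow>
          distN N x (feas A b) \<le> ereal (\<kappa> * param_norm N (A' - A) (b' - b))))}"

end

theory Submission
  imports Defs
begin

text \<open>A perturbation of size P moves the residuals a_t' x - b_t of a point x by at most P (1 + N x);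
  conversely, a point with residuals at most \<rho> is feasible for the system obtained by tilting
  every row along a norming functional of x, at parameter distance \<rho> / (1 + N x). Hence
  calmness of F at a feasible point x amounts, up to the factor 1 + N x, to a local error bound
  dist(y, F) \<le> c \<rho> for points y near x with residuals at most \<rho>. Near a feasible v the set F
  coincides with v plus a cone, so a local error bound at v holds with the same constant at every
  feasible x whose active constraints are among those of v. Maximising N over the face of F
  cut out by the constraints active at x yields such a v among the extreme points, whence
  clm at x is at most clm at some extreme point. Since F is compact and upper semicontinuous
  at (A, b), calmness with a common constant at all of its points yields Lipschitz upper
  semicontinuity, while the reverse inequality is immediate. Boundedness forces the rows to
  span R^n, so E(A, b) is just the set of extreme points of F.\<close>


section \<open>Norms on real^'n and their duals\<close>

locale vector_norm =
  fixes N :: "real^'n \<Rightarrow> real"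
  assumes is_norm: "is_norm N"
begin

lemma nonneg: "0 \<le> N x"
  using is_norm by (simp add: is_norm_def)

lemma eq_0_iff: "N x = 0 \<longleftrightarrow> x = 0"
  using is_norm by (simp add: is_norm_def)

lemma pos: "x \<noteq> 0 \<Longrightarrow> 0 < N x"
  using nonneg[of x] eq_0_iff[of x] by linarith

lemma scaleR: "N (c *\<^sub>R x) = \<bar>c\<bar> * N x"
  using is_norm by (simp add: is_norm_def)

lemma triangle: "N (x + y) \<le> N x + N y"
  using is_norm by (simp add: is_norm_def)

lemma zero [simp]: "N 0 = 0"
  using eq_0_iff by simp

lemma minus: "N (- x) = N x"
  using scaleR[of "-1" x] by simp

lemma minus_commute: "N (x - y) = N (y - x)"
  using minus[of "x - y"] by simp

lemma triangle_diff: "N (x - z) \<le> N (x - y) + N (y - z)"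
  using triangle[of "x - y" "y - z"] by simp

lemma le_add_diff: "N x \<le> N y + N (x - y)"
  using triangle[of y "x - y"] by simp

lemma convex_on_UNIV: "convex_on UNIV N"
proof (rule convex_onI)
  fix t :: real and x y :: "real^'n"
  assume "0 < t" "t < 1"
  then show "N ((1 - t) *\<^sub>R x + t *\<^sub>R y) \<le> (1 - t) * N x + t * N y"
    using triangle[of "(1 - t) *\<^sub>R x" "t *\<^sub>R y"] by (simp add: scaleR)
qed simp

lemma continuous_on: "continuous_on S N"
  using convex_on_continuous[OF open_UNIV convex_on_UNIV] continuous_on_subset by blast

lemma continuous_on_shift: "continuous_on S (\<lambda>x. N (x - z))"
  by (rule continuous_on_compose2[OF continuous_on, of _ _ UNIV])
    (auto intro: continuous_on_diff continuous_on_id continuous_on_const)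

lemma eq_norm_times_unit: "N x = norm x * N ((1 / norm x) *\<^sub>R x)"
  by (cases "x = 0") (simp_all add: scaleR)

lemma bounded_below_by_norm:
  obtains c where "0 < c" "\<And>x. c * norm x \<le> N x"
proof -
  obtain x0 where x0: "norm x0 = 1" "\<And>y. norm y = 1 \<Longrightarrow> N x0 \<le> N y"
    using continuous_attains_inf[of "sphere 0 1" N] continuous_on by auto
  show ?thesis
  proof (rule that)
    show "0 < N x0"
      using x0(1) by (auto intro: pos)
    show "N x0 * norm x \<le> N x" for x
      using x0(2)[of "(1 / norm x) *\<^sub>R x"] eq_norm_times_unit[of x]
      by (cases "x = 0") (simp_all add: mult.commute mult_left_mono)
  qed
qed

lemma bounded_above_by_norm:
  obtains C where "0 < C" "\<And>x. N x \<le> C * norm x"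
proof -
  obtain x1 where x1: "norm x1 = 1" "\<And>y. norm y = 1 \<Longrightarrow> N y \<le> N x1"
    using continuous_attains_sup[of "sphere 0 1" N] continuous_on by auto
  show ?thesis
  proof (rule that)
    show "0 < N x1"
      using x1(1) by (auto intro: pos)
    show "N x \<le> N x1 * norm x" for x
      using x1(2)[of "(1 / norm x) *\<^sub>R x"] eq_norm_times_unit[of x]
      by (cases "x = 0") (simp_all add: mult.commute mult_left_mono)
  qed
qed

lemma bdd_above_dual: "bdd_above {\<bar>u \<bullet> x\<bar> | x. N x \<le> 1}"
proof -
  obtain c where c: "0 < c" "\<And>x. c * norm x \<le> N x"
    using bounded_below_by_norm by blast
  have "\<bar>u \<bullet> x\<bar> \<le> norm u / c" if "N x \<le> 1" for x
  proof -
    have "c * norm x \<le> 1"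
      using c(2) that by (rule order_trans)
    then have "norm x \<le> 1 / c"
      using c(1) by (simp add: pos_le_divide_eq mult.commute)
    have "\<bar>u \<bullet> x\<bar> \<le> norm u * norm x"
      by (rule Cauchy_Schwarz_ineq2)
    also have "\<dots> \<le> norm u * (1 / c)"
      using \<open>norm x \<le> 1 / c\<close> by (rule mult_left_mono) simp
    finally show ?thesis
      by simp
  qed
  then show ?thesis
    by (intro bdd_aboveI[of _ "norm u / c"]) auto
qed

lemma dual_norm_ge: "N x \<le> 1 \<Longrightarrow> \<bar>u \<bullet> x\<bar> \<le> dual_norm N u"
  unfolding dual_norm_def by (rule cSup_upper[OF _ bdd_above_dual]) auto

lemma dual_norm_le: "(\<And>x. N x \<le> 1 \<Longrightarrow> \<bar>u \<bullet> x\<bar> \<le> \<theta>) \<Longrightarrow> dual_norm N u \<le> \<theta>"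
  unfolding dual_norm_def by (rule cSup_least) (auto intro: exI[of _ 0])

lemma inner_le_dual_norm: "\<bar>u \<bullet> x\<bar> \<le> dual_norm N u * N x"
proof (cases "x = 0")
  case False
  then have "\<bar>u \<bullet> ((1 / N x) *\<^sub>R x)\<bar> \<le> dual_norm N u"
    using pos[OF False] by (intro dual_norm_ge) (simp add: scaleR)
  then show ?thesis
    using pos[OF False] by (simp add: field_simps abs_mult)
qed simp

lemma dual_norm_scaleR_le: "dual_norm N (c *\<^sub>R u) \<le> \<bar>c\<bar> * dual_norm N u"
proof (rule dual_norm_le)
  fix x assume "N x \<le> 1"
  then have "\<bar>c\<bar> * \<bar>u \<bullet> x\<bar> \<le> \<bar>c\<bar> * dual_norm N u"
    by (intro mult_left_mono dual_norm_ge) auto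
  then show "\<bar>c *\<^sub>R u \<bullet> x\<bar> \<le> \<bar>c\<bar> * dual_norm N u"
    by (simp add: abs_mult)
qed

lemma convex_unit_ball: "convex {y. N y \<le> 1}"
proof (rule convexI)
  fix x y :: "real^'n" and u v :: real
  assume "x \<in> {y. N y \<le> 1}" "y \<in> {y. N y \<le> 1}" "0 \<le> u" "0 \<le> v" "u + v = 1"
  then show "u *\<^sub>R x + v *\<^sub>R y \<in> {y. N y \<le> 1}"
    using convex_lower[OF convex_on_UNIV, of x y u v] by simp
qed

lemma closed_unit_ball: "closed {y. N y \<le> 1}"
  by (rule closed_Collect_le[OF continuous_on continuous_on_const])

lemma zero_in_interior_unit_ball: "0 \<in> interior {y. N y \<le> 1}"
proof -
  have "{y. N y < 1} \<subseteq> interior {y. N y \<le> 1}"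
    by (rule interior_maximal) (auto intro: open_Collect_less continuous_on)
  then show ?thesis
    by auto
qed

lemma not_in_interior_unit_ball: "N p = 1 \<Longrightarrow> p \<notin> interior {y. N y \<le> 1}"
proof
  assume "N p = 1" and "p \<in> interior {y. N y \<le> 1}"
  then obtain e where "0 < e" and e: "ball p e \<subseteq> {y. N y \<le> 1}"
    by (meson mem_interior)
  have "0 < norm p"
    using \<open>N p = 1\<close> by auto
  define q where "q = (1 + e / (2 * norm p)) *\<^sub>R p"
  have "dist p q < e"
    using \<open>0 < norm p\<close> \<open>0 < e\<close> by (simp add: q_def dist_norm algebra_simps)
  then have "N q \<le> 1"
    using e by auto
  moreover have "N q = 1 + e / (2 * norm p)"
    using \<open>0 < norm p\<close> \<open>0 < e\<close> \<open>N p = 1\<close> by (simp add: q_def scaleR)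
  ultimately show False
    using \<open>0 < norm p\<close> \<open>0 < e\<close> by (simp add: field_simps)
qed

text \<open>Finite-dimensional Hahn--Banach: a supporting hyperplane of the unit ball at x / N x.\<close>
lemma norming_functional:
  obtains u where "dual_norm N u \<le> 1" "u \<bullet> x = N x"
proof (cases "x = 0")
  case True
  then show ?thesis
    using that[of 0] dual_norm_le[of 0 1] by simp
next
  case False
  define B where "B = {y. N y \<le> 1}"
  define p where "p = (1 / N x) *\<^sub>R x"
  have "N p = 1"
    using pos[OF False] by (simp add: p_def scaleR)
  have rel: "rel_interior B = interior B"
    using zero_in_interior_unit_ball by (intro rel_interior_nonempty_interior) (auto simp: B_def)
  obtain a where a: "\<And>y. y \<in> B \<Longrightarrow> a \<bullet> p \<le> a \<bullet> y" "a \<bullet> p < a \<bullet> 0"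
  proof (rule supporting_hyperplane_relative_frontier[of B p])
    show "convex B"
      unfolding B_def by (rule convex_unit_ball)
    show "p \<in> closure B"
      using closed_unit_ball \<open>N p = 1\<close> by (simp add: B_def)
    show "p \<notin> rel_interior B"
      using not_in_interior_unit_ball[OF \<open>N p = 1\<close>] rel by (simp add: B_def)
    fix a assume "\<And>y. y \<in> closure B \<Longrightarrow> a \<bullet> p \<le> a \<bullet> y" "\<And>y. y \<in> rel_interior B \<Longrightarrow> a \<bullet> p < a \<bullet> y"
    then show thesis
      using that closed_unit_ball zero_in_interior_unit_ball rel by (metis B_def closure_closed)
  qed
  define s where "s = - (a \<bullet> p)"
  have "0 < s"
    using a(2) by (simp add: s_def)
  define u where "u = (- 1 / s) *\<^sub>R a"
  show ?thesis
  proof (rule that)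
    show "dual_norm N u \<le> 1"
    proof (rule dual_norm_le)
      fix y assume "N y \<le> 1"
      then have "y \<in> B" "- y \<in> B"
        by (simp_all add: B_def minus)
      then have "a \<bullet> p \<le> a \<bullet> y" "a \<bullet> p \<le> - (a \<bullet> y)"
        using a(1) by force+
      then have "\<bar>a \<bullet> y\<bar> \<le> s"
        by (simp add: s_def)
      then show "\<bar>u \<bullet> y\<bar> \<le> 1"
        using \<open>0 < s\<close> by (simp add: u_def abs_mult)
    qed
    have "u \<bullet> p = 1"
      using \<open>0 < s\<close> by (simp add: u_def s_def)
    then show "u \<bullet> x = N x"
      using pos[OF False] by (simp add: p_def)
  qed
qed

end

section \<open>Polyhedral geometry of the feasible set\<close>

lemma convex_on_le_at_extreme_point:
  fixes S :: "'a::euclidean_space set"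
  assumes "compact S" and "convex S" and fin: "finite {v. v extreme_point_of S}"
    and "convex_on S f" and "x \<in> S"
  obtains v where "v extreme_point_of S" and "f x \<le> f v"
proof -
  define E where "E = {v. v extreme_point_of S}"
  have hull: "S = convex hull E"
    unfolding E_def by (rule Krein_Milman_Minkowski[OF assms(1,2)])
  then have "E \<noteq> {}"
    using \<open>x \<in> S\<close> by auto
  have "finite E"
    using fin by (simp add: E_def)
  have "\<forall>y\<in>convex hull E. f y \<le> Max (f ` E)"
    using \<open>finite E\<close> \<open>convex_on S f\<close> hull by (intro convex_on_convex_hull_bound) auto
  then have "f x \<le> Max (f ` E)"
    using \<open>x \<in> S\<close> hull by auto
  moreover have "Max (f ` E) \<in> f ` E"
    using \<open>finite E\<close> \<open>E \<noteq> {}\<close> by simp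
  then obtain v where "v \<in> E" "Max (f ` E) = f v"
    by blast
  ultimately show ?thesis
    using that by (auto simp: E_def)
qed

lemma uniformly_positive_on_compact:
  fixes f :: "'i::finite \<Rightarrow> 'a::topological_space \<Rightarrow> real"
  assumes "compact K" and cont: "\<And>i. continuous_on K (f i)" and pos: "\<And>x. x \<in> K \<Longrightarrow> \<exists>i. 0 < f i x"
  obtains \<eta> where "0 < \<eta>" and "\<And>x. x \<in> K \<Longrightarrow> \<exists>i. \<eta> < f i x"
proof (cases "K = {}")
  case True
  then show ?thesis
    using that[of 1] by simp
next
  case False
  define g where "g x = (\<Sum>i\<in>UNIV. max 0 (f i x))" for x
  have "continuous_on K g"
    unfolding g_def by (intro continuous_intros cont)
  then obtain x0 where "x0 \<in> K" and x0: "\<And>x. x \<in> K \<Longrightarrow> g x0 \<le> g x"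
    using continuous_attains_inf[OF \<open>compact K\<close> False] by blast
  obtain i0 where "0 < f i0 x0"
    using pos[OF \<open>x0 \<in> K\<close>] by blast
  moreover have "max 0 (f i0 x0) \<le> g x0"
    unfolding g_def by (rule member_le_sum) auto
  ultimately have "0 < g x0"
    by linarith
  define \<eta> where "\<eta> = g x0 / (2 * CARD('i))"
  show ?thesis
  proof (rule that)
    show "0 < \<eta>"
      using \<open>0 < g x0\<close> by (simp add: \<eta>_def)
    show "\<exists>i. \<eta> < f i x" if "x \<in> K" for x
    proof (rule ccontr)
      assume "\<nexists>i. \<eta> < f i x"
      then have "g x \<le> (\<Sum>i\<in>(UNIV::'i set). \<eta>)"
        unfolding g_def using \<open>0 < \<eta>\<close> by (intro sum_mono) (simp add: not_less)
      also have "\<dots> < g x0"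
        using \<open>0 < g x0\<close> by (simp add: \<eta>_def)
      finally show False
        using x0[OF that] by simp
    qed
  qed
qed


lemma param_norm_ge:
  fixes A :: "real^'n^'m::finite"
  shows "dual_norm N (A $ t) \<le> param_norm N A b" and "\<bar>b $ t\<bar> \<le> param_norm N A b"
proof -
  have "max (dual_norm N (A $ t)) \<bar>b $ t\<bar> \<le> param_norm N A b"
    unfolding param_norm_def by (rule Max_ge) auto
  then show "dual_norm N (A $ t) \<le> param_norm N A b" "\<bar>b $ t\<bar> \<le> param_norm N A b"
    by simp_all
qed

lemma param_norm_nonneg: "0 \<le> param_norm N A b"
  using param_norm_ge(2)[of b undefined N A] by linarith

lemma param_norm_le:
  assumes "\<And>t. dual_norm N (A $ t) \<le> \<theta>" "\<And>t. \<bar>b $ t\<bar> \<le> \<theta>"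
  shows "param_norm N A b \<le> \<theta>"
  unfolding param_norm_def using assms by (subst Max_le_iff) auto

lemma distN_le: "z \<in> S \<Longrightarrow> distN N x S \<le> ereal (N (x - z))"
  unfolding distN_def by (rule INF_lower) auto

lemma distN_less_iff: "distN N x S < ereal r \<longleftrightarrow> (\<exists>z\<in>S. N (x - z) < r)"
  unfolding distN_def by (simp add: INF_less_iff)

lemma distN_le_epsilon:
  assumes "\<And>e. 0 < e \<Longrightarrow> \<exists>z\<in>S. N (x - z) \<le> r + e"
  shows "distN N x S \<le> ereal r"
proof (rule ereal_le_epsilon2)
  fix e :: real assume "0 < e"
  then obtain z where "z \<in> S" "N (x - z) \<le> r + e"
    using assms by blast
  have "distN N x S \<le> ereal (N (x - z))"
    by (rule distN_le) fact
  also have "\<dots> \<le> ereal r + ereal e"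
    using \<open>N (x - z) \<le> r + e\<close> by simp
  finally show "distN N x S \<le> ereal r + ereal e" .
qed

lemma polyhedron_feas: "polyhedron (feas A b)"
proof -
  have "feas A b = (\<Inter>t. {x. A $ t \<bullet> x \<le> b $ t})"
    by (auto simp: feas_def)
  then show ?thesis
    by (auto intro: polyhedron_halfspace_le)
qed

lemma closed_feas: "closed (feas A b)"
  by (rule polyhedron_imp_closed[OF polyhedron_feas])

lemma convex_feas: "convex (feas A b)"
  by (rule polyhedron_imp_convex[OF polyhedron_feas])

lemma compact_feas: "bounded (feas A b) \<Longrightarrow> compact (feas A b)"
  using closed_feas by (simp add: compact_eq_bounded_closed)

lemma finite_extreme_points_feas: "finite {v. v extreme_point_of feas A b}"
  by (rule finite_polyhedron_extreme_points[OF polyhedron_feas])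

lemma feas_unbounded_of_recession_direction:
  assumes x0: "x0 \<in> feas A b" and "d \<noteq> 0" and dir: "\<And>t. A $ t \<bullet> d \<le> 0"
  shows "\<not> bounded (feas A b)"
proof
  assume "bounded (feas A b)"
  then obtain B where B: "\<And>x. x \<in> feas A b \<Longrightarrow> norm x \<le> B"
    by (auto simp: bounded_iff)
  define s where "s = (B + norm x0 + 1) / norm d"
  have "0 \<le> s"
    using B[OF x0] norm_ge_zero[of x0] unfolding s_def by (intro divide_nonneg_nonneg) (linarith, simp)
  have "A $ t \<bullet> (x0 + s *\<^sub>R d) \<le> b $ t" for t
  proof -
    have "A $ t \<bullet> x0 \<le> b $ t"
      using x0 by (simp add: feas_def)
    then show ?thesis
      using mult_nonneg_nonpos[OF \<open>0 \<le> s\<close> dir[of t]] by (simp add: inner_add_right)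
  qed
  then have "x0 + s *\<^sub>R d \<in> feas A b"
    by (simp add: feas_def)
  then have "norm (x0 + s *\<^sub>R d) \<le> B"
    by (rule B)
  moreover have "s * norm d - norm x0 \<le> norm (x0 + s *\<^sub>R d)"
    using norm_triangle_ineq2[of "s *\<^sub>R d" "- x0"] \<open>0 \<le> s\<close> by (simp add: algebra_simps)
  moreover have "s * norm d = B + norm x0 + 1"
    using \<open>d \<noteq> 0\<close> by (simp add: s_def)
  ultimately show False
    by linarith
qed

lemma span_rows_eq_UNIV:
  assumes "feas A b \<noteq> {}" and "bounded (feas A b)"
  shows "span (range (\<lambda>t. A $ t)) = UNIV"
proof (rule ccontr)
  assume "span (range (\<lambda>t. A $ t)) \<noteq> UNIV"
  then obtain d where "d \<noteq> 0" and orth: "span (range (\<lambda>t. A $ t)) \<subseteq> {x. d \<bullet> x = 0}"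
    using span_not_univ_subset_hyperplane by blast
  have "A $ t \<bullet> d = 0" for t
    using orth span_base[of "A $ t" "range (\<lambda>t. A $ t)"] by (auto simp: inner_commute)
  moreover obtain x0 where "x0 \<in> feas A b"
    using assms(1) by blast
  ultimately have "\<not> bounded (feas A b)"
    using feas_unbounded_of_recession_direction[OF _ \<open>d \<noteq> 0\<close>] by (metis order.refl)
  then show False
    using assms(2) by simp
qed

lemma extr_set_eq:
  assumes "feas A b \<noteq> {}" and "bounded (feas A b)"
  shows "extr_set A b = {v. v extreme_point_of feas A b}"
  unfolding extr_set_def using span_rows_eq_UNIV[OF assms] by simp

lemma rows_uniformly_positive:
  fixes A :: "real^'n^'m::finite"
  assumes "feas A b \<noteq> {}" and "bounded (feas A b)"
  obtains \<eta> where "0 < \<eta>" and "\<And>x. \<exists>t. \<eta> * norm x \<le> A $ t \<bullet> x"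
proof -
  obtain x0 where "x0 \<in> feas A b"
    using assms(1) by blast
  have pos: "\<exists>t. 0 < A $ t \<bullet> d" if "d \<in> sphere 0 1" for d
  proof (rule ccontr)
    assume "\<nexists>t. 0 < A $ t \<bullet> d"
    then have "A $ t \<bullet> d \<le> 0" for t
      by (simp add: not_less)
    moreover have "d \<noteq> 0"
      using that by auto
    ultimately have "\<not> bounded (feas A b)"
      using feas_unbounded_of_recession_direction[OF \<open>x0 \<in> feas A b\<close>] by blast
    then show False
      using assms(2) by simp
  qed
  have cont: "continuous_on (sphere 0 1) (\<lambda>d. A $ t \<bullet> d)" for t
    by (intro continuous_intros)
  obtain \<eta> where "0 < \<eta>" and dir: "\<And>d. d \<in> sphere 0 1 \<Longrightarrow> \<exists>t. \<eta> < A $ t \<bullet> d"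
    using uniformly_positive_on_compact[where f = "\<lambda>t d. A $ t \<bullet> d", OF compact_sphere cont pos]
    by blast
  have "\<exists>t. \<eta> * norm x \<le> A $ t \<bullet> x" for x
  proof (cases "x = 0")
    case False
    then obtain t where "\<eta> < A $ t \<bullet> ((1 / norm x) *\<^sub>R x)"
      using dir[of "(1 / norm x) *\<^sub>R x"] by auto
    then have "\<eta> * norm x \<le> A $ t \<bullet> x"
      using False by (simp add: field_simps)
    then show ?thesis
      by blast
  qed simp
  then show ?thesis
    using that \<open>0 < \<eta>\<close> by blast
qed

lemma residual_homothety_le:
  assumes "v \<in> feas A b" and "0 \<le> \<tau>" and "\<tau> \<le> 1" and "A $ t \<bullet> x - b $ t \<le> \<rho>"
  shows "A $ t \<bullet> (v + \<tau> *\<^sub>R (x - v)) - b $ t \<le> \<tau> * \<rho>"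
proof -
  have "A $ t \<bullet> (v + \<tau> *\<^sub>R (x - v)) - b $ t
      = (1 - \<tau>) * (A $ t \<bullet> v - b $ t) + \<tau> * (A $ t \<bullet> x - b $ t)"
    by (simp add: algebra_simps)
  moreover have "(1 - \<tau>) * (A $ t \<bullet> v - b $ t) \<le> 0"
    using assms(1,3) by (intro mult_nonneg_nonpos) (auto simp: feas_def)
  moreover have "\<tau> * (A $ t \<bullet> x - b $ t) \<le> \<tau> * \<rho>"
    using assms(4,2) by (rule mult_left_mono)
  ultimately show ?thesis
    by linarith
qed

definition active_constraints :: "real^'n^'m \<Rightarrow> real^'m \<Rightarrow> real^'n \<Rightarrow> 'm set" where
  "active_constraints A b x = {t. A $ t \<bullet> x = b $ t}"

lemma uniform_slack:
  fixes A :: "real^'n^'m::finite"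
  obtains \<sigma> where "0 < \<sigma>" "\<And>t. A $ t \<bullet> x < b $ t \<Longrightarrow> A $ t \<bullet> x + \<sigma> \<le> b $ t"
proof
  define S where "S = insert 1 ((\<lambda>t. b $ t - A $ t \<bullet> x) ` {t. A $ t \<bullet> x < b $ t})"
  have "finite S"
    by (simp add: S_def)
  then show "0 < Min S"
    by (auto simp: S_def)
  show "A $ t \<bullet> x + Min S \<le> b $ t" if "A $ t \<bullet> x < b $ t" for t
  proof -
    have "b $ t - A $ t \<bullet> x \<in> S"
      using that by (simp add: S_def)
    then have "Min S \<le> b $ t - A $ t \<bullet> x"
      by (rule Min_le[OF \<open>finite S\<close>])
    then show ?thesis
      by simp
  qed
qed

text \<open>The sum of the constraints in I is a valid inequality whose equality set is the face.\<close>
lemma face_of_feas_active: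
  fixes A :: "real^'n^'m::finite"
  shows "{x \<in> feas A b. I \<subseteq> active_constraints A b x} face_of feas A b"
proof -
  define a where "a = (\<Sum>t\<in>I. A $ t)"
  define d where "d = (\<Sum>t\<in>I. b $ t)"
  have slack: "d - a \<bullet> x = (\<Sum>t\<in>I. b $ t - A $ t \<bullet> x)" for x
    by (simp add: a_def d_def inner_sum_left sum_subtractf)
  have nonneg: "0 \<le> b $ t - A $ t \<bullet> x" if "x \<in> feas A b" for x t
    using that by (simp add: feas_def)
  have "a \<bullet> x \<le> d" if "x \<in> feas A b" for x
    using sum_nonneg[of I "\<lambda>t. b $ t - A $ t \<bullet> x"] nonneg[OF that] slack[of x] by simp
  then have "feas A b \<inter> {x. a \<bullet> x = d} face_of feas A b"
    by (rule face_of_Int_supporting_hyperplane_le[OF convex_feas])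
  moreover have "a \<bullet> x = d \<longleftrightarrow> I \<subseteq> active_constraints A b x" if "x \<in> feas A b" for x
    using sum_nonneg_eq_0_iff[of I "\<lambda>t. b $ t - A $ t \<bullet> x"] nonneg[OF that] slack[of x]
    by (auto simp: active_constraints_def)
  then have "{x \<in> feas A b. I \<subseteq> active_constraints A b x} = feas A b \<inter> {x. a \<bullet> x = d}"
    by blast
  ultimately show ?thesis
    by simp
qed

section \<open>Calmness and local error bounds\<close>

definition local_error_bound ::
    "(real^'n \<Rightarrow> real) \<Rightarrow> real^'n^'m::finite \<Rightarrow> real^'m \<Rightarrow> real^'n \<Rightarrow> real \<Rightarrow> bool" where
  "local_error_bound N A b xb c \<longleftrightarrow> 0 \<le> c \<and> (\<exists>\<epsilon>>0. \<forall>x \<rho>. N (x - xb) < \<epsilon> \<longrightarrow> 0 \<le> \<rho> \<longrightarrow>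
      (\<forall>t. A $ t \<bullet> x - b $ t \<le> \<rho>) \<longrightarrow> distN N x (feas A b) \<le> ereal (c * \<rho>))"

definition calm_const ::
    "(real^'n \<Rightarrow> real) \<Rightarrow> real^'n^'m::finite \<Rightarrow> real^'m \<Rightarrow> real^'n \<Rightarrow> real \<Rightarrow> bool" where
  "calm_const N A b xb \<kappa> \<longleftrightarrow> 0 \<le> \<kappa> \<and> (\<exists>\<delta>>0. \<exists>\<epsilon>>0. \<forall>A' b'.
      param_norm N (A' - A) (b' - b) < \<delta> \<longrightarrow>
      (\<forall>x\<in>feas A' b'. N (x - xb) < \<epsilon> \<longrightarrow>
          distN N x (feas A b) \<le> ereal (\<kappa> * param_norm N (A' - A) (b' - b))))"

definition lipusc_const ::
    "(real^'n \<Rightarrow> real) \<Rightarrow> real^'n^'m::finite \<Rightarrow> real^'m \<Rightarrow> real \<Rightarrow> bool" where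
  "lipusc_const N A b \<kappa> \<longleftrightarrow> 0 \<le> \<kappa> \<and> (\<exists>\<delta>>0. \<forall>A' b'.
      param_norm N (A' - A) (b' - b) < \<delta> \<longrightarrow>
      (\<forall>x\<in>feas A' b'. distN N x (feas A b) \<le> ereal (\<kappa> * param_norm N (A' - A) (b' - b))))"

lemma clm_eq_Inf_calm_const: "clm N A b xb = Inf {ereal \<kappa> | \<kappa>. calm_const N A b xb \<kappa>}"
  by (simp add: clm_def calm_const_def)

lemma Lipusc_eq_Inf_lipusc_const: "Lipusc N A b = Inf {ereal \<kappa> | \<kappa>. lipusc_const N A b \<kappa>}"
  by (simp add: Lipusc_def lipusc_const_def)

lemma calm_const_of_lipusc_const: "lipusc_const N A b \<kappa> \<Longrightarrow> calm_const N A b xb \<kappa>"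
  unfolding calm_const_def lipusc_const_def using zero_less_one by blast

lemma clm_le_Lipusc: "clm N A b xb \<le> Lipusc N A b"
  unfolding clm_eq_Inf_calm_const Lipusc_eq_Inf_lipusc_const
  using calm_const_of_lipusc_const by (intro Inf_superset_mono) blast

lemma calm_const_mono:
  assumes "calm_const N A b xb \<kappa>" and "\<kappa> \<le> r"
  shows "calm_const N A b xb r"
proof -
  obtain \<delta> \<epsilon> where "0 \<le> \<kappa>" "0 < \<delta>" "0 < \<epsilon>" and calm: "\<And>A' b' x.
      param_norm N (A' - A) (b' - b) < \<delta> \<Longrightarrow> x \<in> feas A' b' \<Longrightarrow> N (x - xb) < \<epsilon> \<Longrightarrow>
      distN N x (feas A b) \<le> ereal (\<kappa> * param_norm N (A' - A) (b' - b))"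
    using assms(1) unfolding calm_const_def by blast
  have "\<forall>A' b'. param_norm N (A' - A) (b' - b) < \<delta> \<longrightarrow> (\<forall>x\<in>feas A' b'. N (x - xb) < \<epsilon> \<longrightarrow>
      distN N x (feas A b) \<le> ereal (r * param_norm N (A' - A) (b' - b)))"
  proof (intro allI impI ballI)
    fix A' b' x
    assume hyps: "param_norm N (A' - A) (b' - b) < \<delta>" "x \<in> feas A' b'" "N (x - xb) < \<epsilon>"
    have "\<kappa> * param_norm N (A' - A) (b' - b) \<le> r * param_norm N (A' - A) (b' - b)"
      using assms(2) param_norm_nonneg by (rule mult_right_mono)
    with calm[OF hyps] show "distN N x (feas A b) \<le> ereal (r * param_norm N (A' - A) (b' - b))"
      by (simp add: order_trans)
  qed
  moreover have "0 \<le> r"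
    using \<open>0 \<le> \<kappa>\<close> assms(2) by linarith
  ultimately show ?thesis
    unfolding calm_const_def using \<open>0 < \<delta>\<close> \<open>0 < \<epsilon>\<close> by blast
qed

lemma calm_const_of_clm_less:
  assumes "clm N A b xb < ereal r"
  shows "calm_const N A b xb r"
proof -
  obtain \<kappa> where "calm_const N A b xb \<kappa>" "ereal \<kappa> < ereal r"
    using assms unfolding clm_eq_Inf_calm_const Inf_less_iff by blast
  then show ?thesis
    by (elim calm_const_mono) simp
qed

context vector_norm
begin

lemma inner_row_le: "A $ t \<bullet> y \<le> param_norm N A b * N y"
  using inner_le_dual_norm[of "A $ t" y] mult_right_mono[OF param_norm_ge(1) nonneg]
  by (meson abs_le_D1 order_trans)

lemma residual_le_near_feasible:
  assumes "v \<in> feas A b"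
  shows "A $ t \<bullet> x - b $ t \<le> param_norm N A b * N (x - v)"
proof -
  have "A $ t \<bullet> v \<le> b $ t"
    using assms by (simp add: feas_def)
  then show ?thesis
    using inner_row_le[of A t "x - v" b] by (simp add: inner_diff_right)
qed

lemma residual_le_perturbation:
  assumes "x \<in> feas A' b'"
  shows "A $ t \<bullet> x - b $ t \<le> param_norm N (A' - A) (b' - b) * (1 + N x)"
proof -
  define P where "P = param_norm N (A' - A) (b' - b)"
  have "\<bar>(A' - A) $ t \<bullet> x\<bar> \<le> P * N x"
    using inner_le_dual_norm mult_right_mono[OF param_norm_ge(1) nonneg] unfolding P_def
    by (meson order_trans)
  moreover have "\<bar>(b' - b) $ t\<bar> \<le> P"
    unfolding P_def by (rule param_norm_ge(2))
  moreover have "A' $ t \<bullet> x \<le> b' $ t"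
    using assms by (simp add: feas_def)
  ultimately show ?thesis
    by (simp add: P_def algebra_simps abs_le_iff)
qed

text \<open>Tilting every row by \<theta> u, for a norming functional u of x, costs \<theta> in parameter norm and
  relaxes the constraints at x by \<theta> (1 + N x).\<close>
lemma perturbation_to_feasibility:
  fixes A :: "real^'n^'m::finite"
  assumes res: "\<forall>t. A $ t \<bullet> x - b $ t \<le> \<rho>" and "0 \<le> \<rho>"
  obtains A' b' where "x \<in> feas A' b'" and "param_norm N (A' - A) (b' - b) \<le> \<rho> / (1 + N x)"
proof -
  obtain u where u: "dual_norm N u \<le> 1" "u \<bullet> x = N x"
    by (rule norming_functional)
  define \<theta> where "\<theta> = \<rho> / (1 + N x)"
  have "0 < 1 + N x"
    using nonneg[of x] by linarith
  then have "0 \<le> \<theta>" and \<theta>: "\<theta> * (1 + N x) = \<rho>"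
    using \<open>0 \<le> \<rho>\<close> by (simp_all add: \<theta>_def)
  show ?thesis
  proof (rule that)
    have "A $ t \<bullet> x - b $ t \<le> \<theta> * (1 + u \<bullet> x)" for t
      using res \<theta> u(2) by simp
    then show "x \<in> feas (A - (\<chi> t. \<theta> *\<^sub>R u)) (b + (\<chi> t. \<theta>))"
      by (simp add: feas_def algebra_simps)
    have "dual_norm N ((- \<theta>) *\<^sub>R u) \<le> \<theta> * dual_norm N u"
      using dual_norm_scaleR_le[of "- \<theta>" u] \<open>0 \<le> \<theta>\<close> by simp
    also have "\<dots> \<le> \<theta>"
      using u(1) \<open>0 \<le> \<theta>\<close> by (simp add: mult_left_le)
    finally show "param_norm N (A - (\<chi> t. \<theta> *\<^sub>R u) - A) (b + (\<chi> t. \<theta>) - b) \<le> \<rho> / (1 + N x)"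
      unfolding \<theta>_def[symmetric] using \<open>0 \<le> \<theta>\<close> by (intro param_norm_le) simp_all
  qed
qed

text \<open>Near xb every residual is at most param_norm N A b * N (x - xb), so only such \<rho> matter.\<close>
lemma local_error_boundI:
  assumes xb: "xb \<in> feas A b" and "0 \<le> c" and "0 < \<epsilon>"
    and bound: "\<And>x \<rho>. N (x - xb) < \<epsilon> \<Longrightarrow> 0 < \<rho> \<Longrightarrow> \<rho> \<le> param_norm N A b * N (x - xb) \<Longrightarrow>
        \<forall>t. A $ t \<bullet> x - b $ t \<le> \<rho> \<Longrightarrow> distN N x (feas A b) \<le> ereal (c * \<rho>)"
  shows "local_error_bound N A b xb c"
  unfolding local_error_bound_def
proof (intro conjI exI[of _ \<epsilon>] allI impI)
  fix x \<rho>
  assume near: "N (x - xb) < \<epsilon>" and "0 \<le> \<rho>" and res: "\<forall>t. A $ t \<bullet> x - b $ t \<le> \<rho>"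
  define \<rho>' where "\<rho>' = min \<rho> (param_norm N A b * N (x - xb))"
  have res': "\<forall>t. A $ t \<bullet> x - b $ t \<le> \<rho>'"
    using res residual_le_near_feasible[OF xb] by (simp add: \<rho>'_def)
  show "distN N x (feas A b) \<le> ereal (c * \<rho>)"
  proof (cases "0 < \<rho>'")
    case True
    then have "distN N x (feas A b) \<le> ereal (c * \<rho>')"
      using bound[OF near True _ res'] by (simp add: \<rho>'_def)
    also have "c * \<rho>' \<le> c * \<rho>"
      using \<open>0 \<le> c\<close> by (simp add: \<rho>'_def mult_left_mono)
    finally show ?thesis
      by simp
  next
    case False
    have "A $ t \<bullet> x \<le> b $ t" for t
      using res'[rule_format, of t] False by linarith
    then have "x \<in> feas A b"
      by (simp add: feas_def)
    then have "distN N x (feas A b) \<le> 0"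
      using distN_le[of x "feas A b" N x] by (simp add: zero_ereal_def)
    also have "0 \<le> ereal (c * \<rho>)"
      using \<open>0 \<le> c\<close> \<open>0 \<le> \<rho>\<close> by simp
    finally show ?thesis .
  qed
qed (use assms in auto)

lemma calm_const_of_local_error_bound:
  fixes A :: "real^'n^'m::finite"
  assumes "local_error_bound N A b xb c" and "(1 + N xb) * c < \<kappa>"
  shows "calm_const N A b xb \<kappa>"
proof -
  obtain \<epsilon> where "0 \<le> c" "0 < \<epsilon>" and bound: "\<And>x \<rho>. N (x - xb) < \<epsilon> \<Longrightarrow> 0 \<le> \<rho> \<Longrightarrow>
      \<forall>t. A $ t \<bullet> x - b $ t \<le> \<rho> \<Longrightarrow> distN N x (feas A b) \<le> ereal (c * \<rho>)"
    using assms(1) unfolding local_error_bound_def by blast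
  define g where "g = \<kappa> - (1 + N xb) * c"
  define \<epsilon>' where "\<epsilon>' = min \<epsilon> (g / (c + 1))"
  have "0 < g" "0 < \<epsilon>'"
    using assms(2) \<open>0 < \<epsilon>\<close> \<open>0 \<le> c\<close> by (simp_all add: g_def \<epsilon>'_def)
  have "c * \<epsilon>' \<le> c * (g / (c + 1))"
    using \<open>0 \<le> c\<close> by (intro mult_left_mono) (auto simp: \<epsilon>'_def)
  also have "\<dots> \<le> g"
    using \<open>0 \<le> c\<close> \<open>0 < g\<close> by (simp add: field_simps)
  finally have c_eps: "c * (1 + N xb + \<epsilon>') \<le> \<kappa>"
    by (simp add: g_def algebra_simps)
  have "0 \<le> (1 + N xb) * c"
    using \<open>0 \<le> c\<close> nonneg[of xb] by simp
  then have "0 \<le> \<kappa>"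
    using assms(2) by linarith
  have "distN N x (feas A b) \<le> ereal (\<kappa> * param_norm N (A' - A) (b' - b))"
    if x: "x \<in> feas A' b'" and near: "N (x - xb) < \<epsilon>'" for A' :: "real^'n^'m" and b' x
  proof -
    define P where "P = param_norm N (A' - A) (b' - b)"
    have "0 \<le> P"
      unfolding P_def by (rule param_norm_nonneg)
    have "c * (1 + N x) \<le> c * (1 + N xb + \<epsilon>')"
      using le_add_diff[of x xb] near \<open>0 \<le> c\<close> by (intro mult_left_mono) auto
    then have "c * (1 + N x) * P \<le> \<kappa> * P"
      using c_eps \<open>0 \<le> P\<close> by (intro mult_right_mono) auto
    have "distN N x (feas A b) \<le> ereal (c * (P * (1 + N x)))"
      using bound[of x "P * (1 + N x)"] near residual_le_perturbation[OF x] \<open>0 \<le> P\<close> nonneg[of x]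
      by (simp add: P_def \<epsilon>'_def)
    also have "c * (P * (1 + N x)) \<le> \<kappa> * P"
      using \<open>c * (1 + N x) * P \<le> \<kappa> * P\<close> by (simp add: algebra_simps)
    finally show "distN N x (feas A b) \<le> ereal (\<kappa> * param_norm N (A' - A) (b' - b))"
      by (simp add: P_def)
  qed
  then show ?thesis
    unfolding calm_const_def using \<open>0 \<le> \<kappa>\<close> \<open>0 < \<epsilon>'\<close> zero_less_one by blast
qed

lemma local_error_bound_of_calm_const:
  fixes A :: "real^'n^'m::finite"
  assumes v: "v \<in> feas A b" and "calm_const N A b v \<kappa>" and "\<kappa> < c * (1 + N v)"
  shows "local_error_bound N A b v c"
proof -
  obtain \<delta> \<epsilon> where "0 \<le> \<kappa>" "0 < \<delta>" "0 < \<epsilon>" and calm: "\<And>A' b' x.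
      param_norm N (A' - A) (b' - b) < \<delta> \<Longrightarrow> x \<in> feas A' b' \<Longrightarrow> N (x - v) < \<epsilon> \<Longrightarrow>
      distN N x (feas A b) \<le> ereal (\<kappa> * param_norm N (A' - A) (b' - b))"
    using assms(2) unfolding calm_const_def by blast
  have "0 < c * (1 + N v)"
    using assms(3) \<open>0 \<le> \<kappa>\<close> by linarith
  then have "0 < c"
    using nonneg[of v] by (simp add: zero_less_mult_iff)
  define D where "D = param_norm N A b"
  define g where "g = c * (1 + N v) - \<kappa>"
  define \<epsilon>1 where "\<epsilon>1 = min \<epsilon> (min (g / c) (\<delta> / (D + 1)))"
  have "0 \<le> D" "0 < g"
    using assms(3) param_norm_nonneg by (simp_all add: D_def g_def)
  then have "0 < \<epsilon>1"
    using \<open>0 < \<epsilon>\<close> \<open>0 < c\<close> \<open>0 < \<delta>\<close> by (simp add: \<epsilon>1_def)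
  show ?thesis
  proof (rule local_error_boundI[OF v _ \<open>0 < \<epsilon>1\<close>])
    fix x \<rho>
    assume near: "N (x - v) < \<epsilon>1" and "0 < \<rho>" and small: "\<rho> \<le> param_norm N A b * N (x - v)"
      and res: "\<forall>t. A $ t \<bullet> x - b $ t \<le> \<rho>"
    obtain A' b' where "x \<in> feas A' b'" and P: "param_norm N (A' - A) (b' - b) \<le> \<rho> / (1 + N x)"
      using perturbation_to_feasibility[OF res less_imp_le[OF \<open>0 < \<rho>\<close>]] by blast
    have "0 < 1 + N x"
      using nonneg[of x] by linarith
    then have "\<rho> / (1 + N x) \<le> \<rho>"
      using \<open>0 < \<rho>\<close> nonneg[of x] by (simp add: divide_le_eq)
    have "c * \<epsilon>1 \<le> g"
      using \<open>0 < c\<close> mult_left_mono[of \<epsilon>1 "g / c" c] by (simp add: \<epsilon>1_def)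
    moreover have "N v - \<epsilon>1 \<le> N x"
      using le_add_diff[of v x] near minus_commute[of x v] by simp
    ultimately have "\<kappa> \<le> c * (1 + N x)"
      using \<open>0 < c\<close> mult_left_mono[of "N v - \<epsilon>1" "N x" c] by (simp add: g_def algebra_simps)
    have "D * N (x - v) \<le> D * (\<delta> / (D + 1))"
      using near \<open>0 \<le> D\<close> by (intro mult_left_mono) (auto simp: \<epsilon>1_def)
    also have "\<dots> < \<delta>"
      using \<open>0 \<le> D\<close> \<open>0 < \<delta>\<close> by (simp add: field_simps)
    finally have "param_norm N (A' - A) (b' - b) < \<delta>"
      using small P \<open>\<rho> / (1 + N x) \<le> \<rho>\<close> by (simp add: D_def)
    then have "distN N x (feas A b) \<le> ereal (\<kappa> * param_norm N (A' - A) (b' - b))"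
      using calm \<open>x \<in> feas A' b'\<close> near by (simp add: \<epsilon>1_def)
    also have "\<kappa> * param_norm N (A' - A) (b' - b) \<le> \<kappa> * (\<rho> / (1 + N x))"
      using P \<open>0 \<le> \<kappa>\<close> by (rule mult_left_mono)
    also have "\<dots> \<le> c * (1 + N x) * (\<rho> / (1 + N x))"
      using \<open>\<kappa> \<le> c * (1 + N x)\<close> \<open>0 < \<rho>\<close> \<open>0 < 1 + N x\<close> by (intro mult_right_mono) simp_all
    also have "\<dots> = c * \<rho>"
      using \<open>0 < 1 + N x\<close> by simp
    finally show "distN N x (feas A b) \<le> ereal (c * \<rho>)"
      by simp
  qed (use \<open>0 < c\<close> in simp)
qed

text \<open>Shrinking x towards v by a factor \<tau> keeps all residuals below \<tau> \<rho>; a feasible point z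
  near the shrunk point, blown up again by 1 / \<tau>, satisfies every constraint active at v.\<close>
lemma near_point_satisfying_active_constraints:
  assumes v: "v \<in> feas A b" and "local_error_bound N A b v c"
    and res: "\<forall>t. A $ t \<bullet> x - b $ t \<le> \<rho>" and "0 \<le> \<rho>" and "0 < e"
  obtains w where "N (x - w) < c * \<rho> + e" and "\<And>t. t \<in> active_constraints A b v \<Longrightarrow> A $ t \<bullet> w \<le> b $ t"
proof -
  obtain \<epsilon> where "0 \<le> c" "0 < \<epsilon>" and bound: "\<And>y \<rho>. N (y - v) < \<epsilon> \<Longrightarrow> 0 \<le> \<rho> \<Longrightarrow>
      \<forall>t. A $ t \<bullet> y - b $ t \<le> \<rho> \<Longrightarrow> distN N y (feas A b) \<le> ereal (c * \<rho>)"
    using assms(2) unfolding local_error_bound_def by blast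
  define \<tau> where "\<tau> = min 1 (\<epsilon> / (N (x - v) + 1))"
  have "0 < \<tau>" "\<tau> \<le> 1"
    using \<open>0 < \<epsilon>\<close> nonneg[of "x - v"] by (simp_all add: \<tau>_def)
  have "\<tau> * N (x - v) \<le> \<epsilon> / (N (x - v) + 1) * N (x - v)"
    using nonneg[of "x - v"] by (intro mult_right_mono) (auto simp: \<tau>_def)
  also have "\<dots> < \<epsilon>"
    using \<open>0 < \<epsilon>\<close> nonneg[of "x - v"] by (simp add: field_simps)
  finally have "\<tau> * N (x - v) < \<epsilon>" .
  define y where "y = v + \<tau> *\<^sub>R (x - v)"
  have "N (y - v) < \<epsilon>"
    using \<open>\<tau> * N (x - v) < \<epsilon>\<close> \<open>0 < \<tau>\<close> by (simp add: y_def scaleR)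
  moreover have "\<forall>t. A $ t \<bullet> y - b $ t \<le> \<tau> * \<rho>"
    using residual_homothety_le[OF v] \<open>0 < \<tau>\<close> \<open>\<tau> \<le> 1\<close> res by (simp add: y_def)
  ultimately have "distN N y (feas A b) \<le> ereal (c * (\<tau> * \<rho>))"
    using bound \<open>0 \<le> \<rho>\<close> \<open>0 < \<tau>\<close> by simp
  also have "c * (\<tau> * \<rho>) < \<tau> * (c * \<rho> + e)"
    using \<open>0 < \<tau>\<close> \<open>0 < e\<close> by (simp add: algebra_simps)
  finally obtain z where z: "z \<in> feas A b" and "N (y - z) < \<tau> * (c * \<rho> + e)"
    using distN_less_iff by (metis less_ereal.simps(1))
  define w where "w = x + (1 / \<tau>) *\<^sub>R (z - y)"
  show ?thesis
  proof (rule that[of w])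
    have "N (x - w) = N (y - z) / \<tau>"
      using \<open>0 < \<tau>\<close> minus_commute[of z y] by (simp add: w_def scaleR minus)
    then show "N (x - w) < c * \<rho> + e"
      using \<open>N (y - z) < \<tau> * (c * \<rho> + e)\<close> \<open>0 < \<tau>\<close> by (simp add: divide_less_eq mult.commute)
    fix t assume "t \<in> active_constraints A b v"
    then have "A $ t \<bullet> y = b $ t + \<tau> * (A $ t \<bullet> x - b $ t)"
      by (simp add: y_def active_constraints_def algebra_simps)
    moreover have "A $ t \<bullet> w = A $ t \<bullet> x + (A $ t \<bullet> z - A $ t \<bullet> y) / \<tau>"
      by (simp add: w_def divide_inverse algebra_simps)
    ultimately have "A $ t \<bullet> w = b $ t + (A $ t \<bullet> z - b $ t) / \<tau>"
      using \<open>0 < \<tau>\<close> by (simp add: field_simps)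
    also have "\<dots> \<le> b $ t"
      using z \<open>0 < \<tau>\<close> by (simp add: feas_def divide_nonpos_pos)
    finally show "A $ t \<bullet> w \<le> b $ t" .
  qed
qed

lemma feas_of_near_and_active_constraints:
  assumes xb: "xb \<in> feas A b" and slack: "\<And>t. A $ t \<bullet> xb < b $ t \<Longrightarrow> A $ t \<bullet> xb + \<sigma> \<le> b $ t"
    and near: "param_norm N A b * N (w - xb) < \<sigma>"
    and active: "\<And>t. t \<in> active_constraints A b xb \<Longrightarrow> A $ t \<bullet> w \<le> b $ t"
  shows "w \<in> feas A b"
proof -
  have "A $ t \<bullet> w \<le> b $ t" for t
  proof (cases "t \<in> active_constraints A b xb")
    case False
    moreover have "A $ t \<bullet> xb \<le> b $ t"
      using xb by (simp add: feas_def)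
    ultimately have "A $ t \<bullet> xb + \<sigma> \<le> b $ t"
      by (intro slack) (simp add: active_constraints_def)
    moreover have "A $ t \<bullet> (w - xb) \<le> param_norm N A b * N (w - xb)"
      by (rule inner_row_le)
    ultimately show ?thesis
      using near by (simp add: inner_diff_right)
  qed (rule active)
  then show ?thesis
    by (simp add: feas_def)
qed

lemma local_error_bound_of_active_subset:
  assumes xb: "xb \<in> feas A b" and v: "v \<in> feas A b"
    and active: "active_constraints A b xb \<subseteq> active_constraints A b v"
    and "local_error_bound N A b v c"
  shows "local_error_bound N A b xb c"
proof -
  have "0 \<le> c"
    using assms(4) by (simp add: local_error_bound_def)
  obtain \<sigma> where "0 < \<sigma>" and slack: "\<And>t. A $ t \<bullet> xb < b $ t \<Longrightarrow> A $ t \<bullet> xb + \<sigma> \<le> b $ t"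
    using uniform_slack[where A = A and x = xb and b = b] by blast
  define D where "D = param_norm N A b"
  define K where "K = D * (2 + c * D)"
  have "0 \<le> D"
    unfolding D_def by (rule param_norm_nonneg)
  then have "0 \<le> K"
    using \<open>0 \<le> c\<close> by (simp add: K_def)
  define \<epsilon> where "\<epsilon> = \<sigma> / (K + 1)"
  have "0 < \<epsilon>" and K\<epsilon>: "K * \<epsilon> < \<sigma>"
    using \<open>0 < \<sigma>\<close> \<open>0 \<le> K\<close> by (simp_all add: \<epsilon>_def field_simps)
  show ?thesis
  proof (rule local_error_boundI[OF xb \<open>0 \<le> c\<close> \<open>0 < \<epsilon>\<close>])
    fix x \<rho>
    assume near: "N (x - xb) < \<epsilon>" and "0 < \<rho>" and small: "\<rho> \<le> param_norm N A b * N (x - xb)"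
      and res: "\<forall>t. A $ t \<bullet> x - b $ t \<le> \<rho>"
    show "distN N x (feas A b) \<le> ereal (c * \<rho>)"
    proof (rule distN_le_epsilon)
      fix e :: real assume "0 < e"
      obtain w where w: "N (x - w) < c * \<rho> + min e \<epsilon>"
        and w_active: "\<And>t. t \<in> active_constraints A b v \<Longrightarrow> A $ t \<bullet> w \<le> b $ t"
        using near_point_satisfying_active_constraints[OF v assms(4) res] \<open>0 < \<rho>\<close> \<open>0 < e\<close> \<open>0 < \<epsilon>\<close>
        by (metis less_eq_real_def min_less_iff_conj)
      have "c * \<rho> \<le> c * (D * \<epsilon>)"
        using small near \<open>0 \<le> c\<close> \<open>0 \<le> D\<close> mult_left_mono[of "N (x - xb)" \<epsilon> D]
        by (intro mult_left_mono) (auto simp: D_def)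
      then have "N (w - xb) \<le> \<epsilon> * (2 + c * D)"
        using triangle_diff[of w xb x] minus_commute[of x w] w near by (simp add: algebra_simps)
      then have "D * N (w - xb) \<le> D * (\<epsilon> * (2 + c * D))"
        using \<open>0 \<le> D\<close> by (rule mult_left_mono)
      also have "\<dots> = K * \<epsilon>"
        by (simp add: K_def)
      also have "\<dots> < \<sigma>"
        by (rule K\<epsilon>)
      finally have "D * N (w - xb) < \<sigma>" .
      then have "w \<in> feas A b"
        using active w_active unfolding D_def by (intro feas_of_near_and_active_constraints[OF xb slack]) auto
      moreover have "N (x - w) \<le> c * \<rho> + e"
        using w by linarith
      ultimately show "\<exists>z\<in>feas A b. N (x - z) \<le> c * \<rho> + e"
        by blast
    qed
  qed
qed

lemma clm_le_of_active_subset: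
  assumes xb: "xb \<in> feas A b" and v: "v \<in> feas A b"
    and active: "active_constraints A b xb \<subseteq> active_constraints A b v" and "N xb \<le> N v"
  shows "clm N A b xb \<le> clm N A b v"
  unfolding clm_eq_Inf_calm_const[of N A b v]
proof (rule Inf_greatest)
  fix y assume "y \<in> {ereal \<kappa> | \<kappa>. calm_const N A b v \<kappa>}"
  then obtain \<kappa> where y: "y = ereal \<kappa>" and calm: "calm_const N A b v \<kappa>"
    by blast
  have "0 \<le> \<kappa>"
    using calm by (simp add: calm_const_def)
  have "0 < 1 + N v"
    using nonneg[of v] by linarith
  have "clm N A b xb \<le> ereal \<kappa> + ereal e" if "0 < e" for e
  proof -
    define c where "c = (\<kappa> + e / 2) / (1 + N v)"
    have c: "c * (1 + N v) = \<kappa> + e / 2"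
      using \<open>0 < 1 + N v\<close> by (simp add: c_def)
    have "0 \<le> c"
      using \<open>0 \<le> \<kappa>\<close> \<open>0 < e\<close> \<open>0 < 1 + N v\<close> by (simp add: c_def)
    have "\<kappa> < c * (1 + N v)"
      unfolding c using \<open>0 < e\<close> by simp
    then have "local_error_bound N A b v c"
      by (rule local_error_bound_of_calm_const[OF v calm])
    then have "local_error_bound N A b xb c"
      by (rule local_error_bound_of_active_subset[OF xb v active])
    moreover have "(1 + N xb) * c \<le> c * (1 + N v)"
      using mult_right_mono[of "1 + N xb" "1 + N v" c] \<open>N xb \<le> N v\<close> \<open>0 \<le> c\<close>
      by (simp add: mult.commute)
    then have "(1 + N xb) * c < \<kappa> + e"
      using c \<open>0 < e\<close> by linarith
    ultimately have "calm_const N A b xb (\<kappa> + e)"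
      by (rule calm_const_of_local_error_bound)
    then have "clm N A b xb \<le> ereal (\<kappa> + e)"
      unfolding clm_eq_Inf_calm_const by (intro Inf_lower) blast
    then show ?thesis
      by simp
  qed
  then show "clm N A b xb \<le> y"
    unfolding y by (rule ereal_le_epsilon2)
qed

text \<open>Maximise the convex function N over the face of points whose active constraints contain
  those of x.\<close>
lemma extreme_point_with_more_active_constraints:
  assumes "bounded (feas A b)" and x: "x \<in> feas A b"
  obtains v where "v extreme_point_of feas A b"
    and "active_constraints A b x \<subseteq> active_constraints A b v" and "N x \<le> N v"
proof -
  define S where "S = {y \<in> feas A b. active_constraints A b x \<subseteq> active_constraints A b y}"
  have face: "S face_of feas A b"
    unfolding S_def by (rule face_of_feas_active)
  have "compact S"
    using face_of_imp_compact[OF convex_feas compact_feas[OF assms(1)] face] .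
  moreover have "convex S"
    using face by (rule face_of_imp_convex)
  moreover have "finite {v. v extreme_point_of S}"
    using face_of_polyhedron_polyhedron[OF polyhedron_feas face] by (rule finite_polyhedron_extreme_points)
  moreover have "convex_on S N"
    using convex_on_subset[OF convex_on_UNIV] \<open>convex S\<close> by simp
  moreover have "x \<in> S"
    using x by (simp add: S_def)
  ultimately obtain v where v: "v extreme_point_of S" and "N x \<le> N v"
    by (rule convex_on_le_at_extreme_point)
  have "v extreme_point_of feas A b" and "v \<in> S"
    using v extreme_point_of_face[OF face] by auto
  then show ?thesis
    using that \<open>N x \<le> N v\<close> by (simp add: S_def)
qed

lemma clm_le_clm_at_extreme_point:
  assumes "bounded (feas A b)" and x: "x \<in> feas A b"
  obtains v where "v extreme_point_of feas A b" and "clm N A b x \<le> clm N A b v"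
proof -
  obtain v where v: "v extreme_point_of feas A b"
    and active: "active_constraints A b x \<subseteq> active_constraints A b v" and "N x \<le> N v"
    by (rule extreme_point_with_more_active_constraints[OF assms])
  moreover have "v \<in> feas A b"
    using v by (simp add: extreme_point_of_def)
  ultimately show ?thesis
    using that clm_le_of_active_subset[OF x \<open>v \<in> feas A b\<close> active \<open>N x \<le> N v\<close>] by blast
qed

section \<open>Lipschitz upper semicontinuity\<close>

lemma feas_bounded_near:
  fixes A :: "real^'n^'m::finite"
  assumes "feas A b \<noteq> {}" and "bounded (feas A b)"
  obtains \<delta> R where "0 < \<delta>" and "0 \<le> R"
    and "\<And>A' b' x. param_norm N (A' - A) (b' - b) < \<delta> \<Longrightarrow> x \<in> feas A' b' \<Longrightarrow> norm x \<le> R"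
proof -
  obtain \<eta> where "0 < \<eta>" and dir: "\<And>x. \<exists>t. \<eta> * norm x \<le> A $ t \<bullet> x"
    using rows_uniformly_positive[OF assms] by blast
  obtain C where "0 < C" and C: "\<And>x. N x \<le> C * norm x"
    using bounded_above_by_norm by blast
  define B where "B = param_norm N A b"
  define \<delta> where "\<delta> = min 1 (\<eta> / (2 * C))"
  have "0 < \<delta>"
    using \<open>0 < \<eta>\<close> \<open>0 < C\<close> by (simp add: \<delta>_def)
  have "0 \<le> B"
    unfolding B_def by (rule param_norm_nonneg)
  show ?thesis
  proof (rule that[OF \<open>0 < \<delta>\<close>])
    show "0 \<le> 2 * (B + 1) / \<eta>"
      using \<open>0 \<le> B\<close> \<open>0 < \<eta>\<close> by simp
    fix A' b' x
    assume P: "param_norm N (A' - A) (b' - b) < \<delta>" and x: "x \<in> feas A' b'"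
    obtain t where "\<eta> * norm x \<le> A $ t \<bullet> x"
      using dir by blast
    also have "\<dots> \<le> b $ t + param_norm N (A' - A) (b' - b) * (1 + N x)"
      using residual_le_perturbation[OF x, of A t b] by simp
    also have "\<dots> \<le> B + 1 + \<eta> / 2 * norm x"
    proof -
      have "b $ t \<le> B"
        using param_norm_ge(2)[of b t N A] by (simp add: B_def)
      moreover have "param_norm N (A' - A) (b' - b) * (1 + N x) \<le> \<delta> * (1 + C * norm x)"
        using P C[of x] nonneg[of x] param_norm_nonneg \<open>0 < \<delta>\<close> by (intro mult_mono) auto
      moreover have "\<delta> * C * norm x \<le> \<eta> / 2 * norm x"
        using \<open>0 < C\<close> by (intro mult_right_mono) (simp_all add: \<delta>_def min_def field_simps)
      ultimately show ?thesis
        by (simp add: \<delta>_def distrib_left mult.assoc)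
    qed
    finally show "norm x \<le> 2 * (B + 1) / \<eta>"
      using \<open>0 < \<eta>\<close> by (simp add: field_simps)
  qed
qed

lemma residual_uniformly_positive_away_from_feas:
  fixes A :: "real^'n^'m::finite"
  assumes "0 < \<epsilon>"
  obtains \<eta> where "0 < \<eta>"
    and "\<And>x. norm x \<le> R \<Longrightarrow> (\<And>z. z \<in> feas A b \<Longrightarrow> \<epsilon> \<le> N (x - z)) \<Longrightarrow> \<exists>t. \<eta> < A $ t \<bullet> x - b $ t"
proof -
  define K where "K = cball 0 R \<inter> (\<Inter>z\<in>feas A b. {x. \<epsilon> \<le> N (x - z)})"
  have "closed {x. \<epsilon> \<le> N (x - z)}" for z
    by (rule closed_Collect_le[OF continuous_on_const continuous_on_shift])
  then have "compact K"
    unfolding K_def by (intro compact_Int_closed compact_cball closed_INT) auto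
  have pos: "\<exists>t. 0 < A $ t \<bullet> x - b $ t" if "x \<in> K" for x
  proof (rule ccontr)
    assume "\<nexists>t. 0 < A $ t \<bullet> x - b $ t"
    then have "x \<in> feas A b"
      by (simp add: feas_def not_less)
    then have "\<epsilon> \<le> N (x - x)"
      using that by (auto simp: K_def)
    then show False
      using \<open>0 < \<epsilon>\<close> by simp
  qed
  have "continuous_on K (\<lambda>x. A $ t \<bullet> x - b $ t)" for t
    by (intro continuous_intros)
  then obtain \<eta> where "0 < \<eta>" and "\<And>x. x \<in> K \<Longrightarrow> \<exists>t. \<eta> < A $ t \<bullet> x - b $ t"
    using uniformly_positive_on_compact[where f = "\<lambda>t x. A $ t \<bullet> x - b $ t", OF \<open>compact K\<close> _ pos]
    by blast
  then show ?thesis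
    using that by (simp add: K_def)
qed

lemma feas_upper_semicontinuous:
  fixes A :: "real^'n^'m::finite"
  assumes "feas A b \<noteq> {}" and "bounded (feas A b)" and "0 < \<epsilon>"
  obtains \<delta> where "0 < \<delta>" and "\<And>A' b' x. param_norm N (A' - A) (b' - b) < \<delta> \<Longrightarrow>
      x \<in> feas A' b' \<Longrightarrow> \<exists>z\<in>feas A b. N (x - z) < \<epsilon>"
proof -
  obtain \<delta>1 R where "0 < \<delta>1" "0 \<le> R" and R: "\<And>A' b' x.
      param_norm N (A' - A) (b' - b) < \<delta>1 \<Longrightarrow> x \<in> feas A' b' \<Longrightarrow> norm x \<le> R"
    using feas_bounded_near[OF assms(1,2)] by blast
  obtain \<eta> where "0 < \<eta>" and away: "\<And>x. norm x \<le> R \<Longrightarrow> (\<And>z. z \<in> feas A b \<Longrightarrow> \<epsilon> \<le> N (x - z)) \<Longrightarrow>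
      \<exists>t. \<eta> < A $ t \<bullet> x - b $ t"
    using residual_uniformly_positive_away_from_feas[OF \<open>0 < \<epsilon>\<close>] by blast
  obtain C where "0 < C" and C: "\<And>x. N x \<le> C * norm x"
    using bounded_above_by_norm by blast
  have "0 < 1 + C * R"
    using \<open>0 < C\<close> \<open>0 \<le> R\<close> by (simp add: add_pos_nonneg)
  define \<delta> where "\<delta> = min \<delta>1 (\<eta> / (1 + C * R))"
  show ?thesis
  proof (rule that)
    show "0 < \<delta>"
      using \<open>0 < \<delta>1\<close> \<open>0 < \<eta>\<close> \<open>0 < 1 + C * R\<close> by (simp add: \<delta>_def)
    fix A' b' x
    assume P: "param_norm N (A' - A) (b' - b) < \<delta>" and x: "x \<in> feas A' b'"
    have "norm x \<le> R"
      using R[OF _ x] P by (simp add: \<delta>_def)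
    have "A $ t \<bullet> x - b $ t \<le> \<eta>" for t
    proof -
      have "A $ t \<bullet> x - b $ t \<le> param_norm N (A' - A) (b' - b) * (1 + N x)"
        by (rule residual_le_perturbation[OF x])
      also have "\<dots> \<le> \<eta> / (1 + C * R) * (1 + C * R)"
      proof (rule mult_mono)
        show "param_norm N (A' - A) (b' - b) \<le> \<eta> / (1 + C * R)"
          using P by (simp add: \<delta>_def)
        show "1 + N x \<le> 1 + C * R"
          using C[of x] mult_left_mono[OF \<open>norm x \<le> R\<close>, of C] \<open>0 < C\<close> by linarith
      qed (use \<open>0 < 1 + C * R\<close> \<open>0 < \<eta>\<close> nonneg[of x] param_norm_nonneg in auto)
      also have "\<dots> = \<eta>"
        using \<open>0 < 1 + C * R\<close> by simp
      finally show ?thesis .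
    qed
    then show "\<exists>z\<in>feas A b. N (x - z) < \<epsilon>"
      using away[OF \<open>norm x \<le> R\<close>] by (meson not_le not_less)
  qed
qed

lemma uniform_neighbourhood_radii:
  fixes \<delta> \<epsilon> :: "real^'n \<Rightarrow> real"
  assumes "compact S" and pos: "\<And>x. x \<in> S \<Longrightarrow> 0 < \<delta> x \<and> 0 < \<epsilon> x"
  obtains \<delta>0 \<epsilon>0 where "0 < \<delta>0" and "0 < \<epsilon>0"
    and "\<And>y z. z \<in> S \<Longrightarrow> N (y - z) < \<epsilon>0 \<Longrightarrow> \<exists>x\<in>S. \<delta>0 \<le> \<delta> x \<and> N (y - x) < \<epsilon> x"
proof (cases "S = {}")
  case True
  then show ?thesis
    using that[of 1 1] by simp
next
  case False
  define U where "U x = {y. N (y - x) < \<epsilon> x / 2}" for x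
  have "open (U x)" for x
    unfolding U_def by (rule open_Collect_less[OF continuous_on_shift continuous_on_const])
  moreover have "S \<subseteq> (\<Union>x\<in>S. U x)"
    using pos by (force simp: U_def)
  ultimately obtain X where "X \<subseteq> S" "finite X" and cover: "S \<subseteq> (\<Union>x\<in>X. U x)"
    using compactE_image[OF \<open>compact S\<close>, of S U] by blast
  then have "X \<noteq> {}"
    using False by auto
  define \<delta>0 where "\<delta>0 = Min (\<delta> ` X)"
  define \<epsilon>0 where "\<epsilon>0 = Min (\<epsilon> ` X) / 2"
  show ?thesis
  proof (rule that)
    show "0 < \<delta>0" "0 < \<epsilon>0"
      using \<open>finite X\<close> \<open>X \<noteq> {}\<close> \<open>X \<subseteq> S\<close> pos by (auto simp: \<epsilon>0_def \<delta>0_def)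
    fix y z assume "z \<in> S" and "N (y - z) < \<epsilon>0"
    then obtain x where "x \<in> X" and "N (z - x) < \<epsilon> x / 2"
      using cover by (auto simp: U_def)
    moreover have "\<epsilon>0 \<le> \<epsilon> x / 2" "\<delta>0 \<le> \<delta> x"
      using \<open>finite X\<close> \<open>x \<in> X\<close> by (auto simp: \<epsilon>0_def \<delta>0_def intro: Min_le)
    ultimately show "\<exists>x\<in>S. \<delta>0 \<le> \<delta> x \<and> N (y - x) < \<epsilon> x"
      using triangle_diff[of y x z] \<open>N (y - z) < \<epsilon>0\<close> \<open>X \<subseteq> S\<close> by force
  qed
qed

lemma lipusc_const_of_calm_const_everywhere:
  fixes A :: "real^'n^'m::finite"
  assumes "feas A b \<noteq> {}" and "bounded (feas A b)" and "0 \<le> \<kappa>"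
    and calm: "\<And>x. x \<in> feas A b \<Longrightarrow> calm_const N A b x \<kappa>"
  shows "lipusc_const N A b \<kappa>"
proof -
  define calm_at where "calm_at x \<delta> \<epsilon> \<longleftrightarrow> (\<forall>A' b'. param_norm N (A' - A) (b' - b) < \<delta> \<longrightarrow>
      (\<forall>y\<in>feas A' b'. N (y - x) < \<epsilon> \<longrightarrow>
        distN N y (feas A b) \<le> ereal (\<kappa> * param_norm N (A' - A) (b' - b))))" for x \<delta> \<epsilon>
  have "\<forall>x\<in>feas A b. \<exists>\<delta>>0. \<exists>\<epsilon>>0. calm_at x \<delta> \<epsilon>"
    using calm unfolding calm_const_def calm_at_def by blast
  then have "\<exists>\<delta>. \<forall>x\<in>feas A b. 0 < \<delta> x \<and> (\<exists>\<epsilon>>0. calm_at x (\<delta> x) \<epsilon>)"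
    by (rule bchoice)
  then obtain \<delta> where "\<forall>x\<in>feas A b. \<exists>\<epsilon>. 0 < \<delta> x \<and> 0 < \<epsilon> \<and> calm_at x (\<delta> x) \<epsilon>"
    by blast
  then have "\<exists>\<epsilon>. \<forall>x\<in>feas A b. 0 < \<delta> x \<and> 0 < \<epsilon> x \<and> calm_at x (\<delta> x) (\<epsilon> x)"
    by (rule bchoice)
  then obtain \<epsilon> where nbhd: "\<forall>x\<in>feas A b. 0 < \<delta> x \<and> 0 < \<epsilon> x \<and> calm_at x (\<delta> x) (\<epsilon> x)"
    by blast
  then obtain \<delta>0 \<epsilon>0 where "0 < \<delta>0" "0 < \<epsilon>0" and radii: "\<And>y z. z \<in> feas A b \<Longrightarrow>
      N (y - z) < \<epsilon>0 \<Longrightarrow> \<exists>x\<in>feas A b. \<delta>0 \<le> \<delta> x \<and> N (y - x) < \<epsilon> x"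
    using uniform_neighbourhood_radii[OF compact_feas[OF assms(2)], of \<delta> \<epsilon>] by blast
  obtain \<delta>1 where "0 < \<delta>1" and usc: "\<And>A' b' y. param_norm N (A' - A) (b' - b) < \<delta>1 \<Longrightarrow>
      y \<in> feas A' b' \<Longrightarrow> \<exists>z\<in>feas A b. N (y - z) < \<epsilon>0"
    using feas_upper_semicontinuous[OF assms(1,2) \<open>0 < \<epsilon>0\<close>] by blast
  have "\<forall>A' b'. param_norm N (A' - A) (b' - b) < min \<delta>0 \<delta>1 \<longrightarrow>
      (\<forall>y\<in>feas A' b'. distN N y (feas A b) \<le> ereal (\<kappa> * param_norm N (A' - A) (b' - b)))"
  proof (intro allI impI ballI)
    fix A' b' y
    assume P: "param_norm N (A' - A) (b' - b) < min \<delta>0 \<delta>1" and y: "y \<in> feas A' b'"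
    obtain x where "x \<in> feas A b" "\<delta>0 \<le> \<delta> x" "N (y - x) < \<epsilon> x"
      using usc[OF _ y] radii P by (meson min_less_iff_conj)
    then show "distN N y (feas A b) \<le> ereal (\<kappa> * param_norm N (A' - A) (b' - b))"
      using nbhd y P unfolding calm_at_def by auto
  qed
  then show ?thesis
    unfolding lipusc_const_def using \<open>0 \<le> \<kappa>\<close> \<open>0 < \<delta>0\<close> \<open>0 < \<delta>1\<close>
    by (intro conjI exI[of _ "min \<delta>0 \<delta>1"]) auto
qed

lemma Lipusc_le_of_clm_le:
  fixes A :: "real^'n^'m::finite"
  assumes "feas A b \<noteq> {}" and "bounded (feas A b)"
    and clm: "\<And>x. x \<in> feas A b \<Longrightarrow> clm N A b x \<le> M"
  shows "Lipusc N A b \<le> M"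
proof (rule dense_ge)
  fix y assume "M < y"
  show "Lipusc N A b \<le> y"
  proof (cases y)
    case (real r)
    then have calm: "calm_const N A b x r" if "x \<in> feas A b" for x
      using clm[OF that] \<open>M < y\<close> by (intro calm_const_of_clm_less) simp
    obtain x0 where "x0 \<in> feas A b"
      using assms(1) by blast
    then have "0 \<le> r"
      using calm by (simp add: calm_const_def)
    then have "lipusc_const N A b r"
      using lipusc_const_of_calm_const_everywhere[OF assms(1,2)] calm by blast
    then show ?thesis
      unfolding Lipusc_eq_Inf_lipusc_const real by (intro Inf_lower) blast
  qed (use \<open>M < y\<close> in auto)
qed

end


theorem theorem5:
  fixes N :: "real^'n \<Rightarrow> real" and A :: "real^'n^'m::finite" and b :: "real^'m"
  assumes "is_norm N"
    and "feas A b \<noteq> {}"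
    and "bounded (feas A b)"
  shows "Lipusc N A b = Max ((\<lambda>x. clm N A b x) ` extr_set A b)"
proof -
  interpret vector_norm N
    by (rule vector_norm.intro[OF assms(1)])
  have E: "extr_set A b = {v. v extreme_point_of feas A b}"
    by (rule extr_set_eq[OF assms(2,3)])
  have fin: "finite (clm N A b ` extr_set A b)"
    unfolding E by (intro finite_imageI finite_extreme_points_feas)
  have ne: "clm N A b ` extr_set A b \<noteq> {}"
    unfolding E using extreme_point_exists_convex[OF compact_feas[OF assms(3)] convex_feas assms(2)]
    by blast
  show ?thesis
  proof (rule antisym)
    show "Lipusc N A b \<le> Max (clm N A b ` extr_set A b)"
    proof (rule Lipusc_le_of_clm_le[OF assms(2,3)])
      fix x assume "x \<in> feas A b"
      then obtain v where "v extreme_point_of feas A b" and "clm N A b x \<le> clm N A b v"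
        by (rule clm_le_clm_at_extreme_point[OF assms(3)])
      then show "clm N A b x \<le> Max (clm N A b ` extr_set A b)"
        using fin by (auto simp: E intro: order_trans[OF _ Max_ge])
    qed
    show "Max (clm N A b ` extr_set A b) \<le> Lipusc N A b"
      using fin ne clm_le_Lipusc by auto
  qed
qed

end
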